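(* Let $\mu$ be a probability measure on $\mathbb{R}^d$ with density $p=f/Z_f$ and $\nu$ a probability measure with density $q=g/Z_g$, where $f,g:\mathbb{R}^d\to(0,\infty)$ are integrable with $Z_f=\int f$, $Z_g=\int g$. Fix $c>0$ and set $\alpha(x)=\min\{1,\frac{g(x)}{cf(x)}\}$ $\big(=\min\{1,\frac{q(x)}{\tilde c p(x)}\}$ with $\tilde c=cZ_f/Z_g\big)$. Let $X,X'\sim\mu$ and $U\sim\mathrm{Unif}[0,1]$ be independent, and define $\tilde X=X$ if $U\le\alpha(X)$ and $\tilde X=X'$ otherwise. Let $\tilde\mu$ be the law of $\tilde X$. Then: (i) $\tilde\mu$ has density $\tilde p(x)=p(x)\big(\alpha(x)+1-\mathbb{E}[\alpha(X)]\big)$; in particular $\tilde p=\tilde f/Z_{\tilde f}$ with $\tilde f(x)=f(x)(\alpha(x)+1-\mathbb{E}[\alpha(X)])$ and $Z_{\tilde f}=Z_f$; (ii) $\mathrm{KL}(\tilde\mu,\nu)\le\mathrm{KL}(\mu,\nu)$.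
   Context: $\mathrm{KL}(\mu,\nu)=\int p(x)\log\frac{p(x)}{q(x)}\,dx$ for measures with densities $p,q$ (and $+\infty$ otherwise). *)

theory Defs
  imports "HOL-Probability.Probability"
begin

definition has_lebesgue_density :: "'a::euclidean_space measure \<Rightarrow> ('a \<Rightarrow> real) \<Rightarrow> bool" where
  "has_lebesgue_density M p \<longleftrightarrow>
     p \<in> borel_measurable lborel \<and> (\<forall>x. 0 \<le> p x) \<and> M = density lborel (\<lambda>x. ennreal (p x))"

text \<open>The extended-valued integral of p log(p/q), with the conventions
  0 log(0/q) = 0 and p log(p/0) = +infinity for p > 0.\<close>
definition KL_dens :: "('a::euclidean_space \<Rightarrow> real) \<Rightarrow> ('a \<Rightarrow> real) \<Rightarrow> ereal" where
  "KL_dens p q =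
     (if emeasure lborel {x. 0 < p x \<and> q x = 0} \<noteq> 0 then \<infinity>
      else enn2ereal (\<integral>\<^sup>+ x. ennreal (p x * ln (p x / q x)) \<partial>lborel)
         - enn2ereal (\<integral>\<^sup>+ x. ennreal (- (p x * ln (p x / q x))) \<partial>lborel))"

definition KL :: "'a::euclidean_space measure \<Rightarrow> 'a measure \<Rightarrow> ereal" where
  "KL \<mu> \<nu> =
     (if (\<exists>p. has_lebesgue_density \<mu> p) \<and> (\<exists>q. has_lebesgue_density \<nu> q)
      then KL_dens (SOME p. has_lebesgue_density \<mu> p) (SOME q. has_lebesgue_density \<nu> q)
      else \<infinity>)"

end

theory Submission
  imports Defs
begin

text \<open>Integrating out \<open>U\<close> and \<open>X'\<close>, the resampled point lands in \<open>A\<close> with probability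
  \<open>E[1\<^sub>A(X) \<alpha>(X)] + (1 - \<beta>) \<mu>(A)\<close>, where \<open>\<beta> = E \<alpha>(X)\<close>; this is the density \<open>p (\<alpha> + 1 - \<beta>)\<close>.
  For the KL bound write \<open>\<alpha> = min 1 (q / (c' p))\<close> with \<open>c' = c Z\<^sub>f / Z\<^sub>g\<close>. Then
  \<open>ln (p/q) = - ln c' - ln \<alpha>\<close> where \<open>\<alpha> < 1\<close>, and \<open>ln (p/q) \<le> - ln c'\<close> where \<open>\<alpha> = 1 \<ge> \<beta>\<close>;
  combined with a one-variable convexity estimate this bounds the new integrand pointwise by
  \<open>p ln (p/q) + K p (\<alpha> - \<beta>)\<close> for a constant \<open>K\<close>, and the correction integrates to
  \<open>K (\<beta> - \<beta>) = 0\<close>.\<close>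

lemma shifted_entropy_le:
  fixes a b :: real
  assumes b_pos: "0 < b" and b_le: "b \<le> 1" and a_pos: "0 < a" and a_le: "a \<le> 1"
  shows "(a + 1 - b) * ln (a + 1 - b) - (a - b) * ln a \<le> (1 - ln b) * (a - b)"
proof -
  define s where "s = 1 - b"
  have s_nonneg: "0 \<le> s" using b_le by (simp add: s_def)
  define \<psi> where "\<psi> t = (t + s) * ln (t + s) - (t + s - 1) * ln t - (1 - ln b) * (t - b)" for t
  define k where "k t = ln ((t + s) / t) + b / t" for t
  have deriv: "DERIV \<psi> t :> k t - k b" if "0 < t" for t
  proof -
    have "DERIV \<psi> t :> 1 * ln (t + s) + (t + s) * (1 / (t + s))
                   - (1 * ln t + (t + s - 1) * (1 / t)) - (1 - ln b) * 1"
      unfolding \<psi>_def using that s_nonneg by (intro derivative_eq_intros) auto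
    moreover have "1 * ln (t + s) + (t + s) * (1 / (t + s)) - (1 * ln t + (t + s - 1) * (1 / t))
          - (1 - ln b) * 1 = k t - k b"
      using that s_nonneg b_pos unfolding k_def by (simp add: s_def ln_div field_simps)
    ultimately show ?thesis by (rule DERIV_cong)
  qed
  \<comment> \<open>As \<open>k\<close> is antitone, \<open>\<psi>\<close> increases up to \<open>b\<close> and decreases afterwards.\<close>
  have k_antimono: "k u \<le> k t" if "0 < t" "t \<le> u" for t u
  proof -
    have "s / u \<le> s / t" using that s_nonneg by (intro divide_left_mono) auto
    then have "(u + s) / u \<le> (t + s) / t" using that by (simp add: add_divide_distrib)
    then have "ln ((u + s) / u) \<le> ln ((t + s) / t)" using that s_nonneg by simp
    moreover have "b / u \<le> b / t" using that b_pos by (intro divide_left_mono) auto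
    ultimately show ?thesis by (simp add: k_def)
  qed
  have "\<psi> a \<le> \<psi> b"
  proof (cases "a \<le> b")
    case True
    show ?thesis
    proof (rule DERIV_nonneg_imp_nondecreasing[OF True])
      fix t assume "a \<le> t" "t \<le> b"
      with a_pos have "0 < t" "k b \<le> k t" using k_antimono by auto
      then show "\<exists>y. DERIV \<psi> t :> y \<and> 0 \<le> y" using deriv by force
    qed
  next
    case False
    show ?thesis
    proof (rule DERIV_nonpos_imp_nonincreasing[of b a \<psi>])
      show "b \<le> a" using False by simp
      fix t assume "b \<le> t" "t \<le> a"
      with b_pos have "0 < t" "k t \<le> k b" using k_antimono by auto
      then show "\<exists>y. DERIV \<psi> t :> y \<and> y \<le> 0" using deriv by force
    qed
  qed
  moreover have "\<psi> b = 0" by (simp add: \<psi>_def s_def)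
  ultimately show ?thesis by (simp add: \<psi>_def s_def algebra_simps)
qed

lemma resample_integrand_le:
  fixes p q c a b :: real
  assumes p_pos: "0 < p" and q_pos: "0 < q" and c_pos: "0 < c" and b_pos: "0 < b" and b_le: "b \<le> 1"
    and a_eq: "a = min 1 (q / (c * p))"
  shows "p * (a + 1 - b) * ln (p * (a + 1 - b) / q)
     \<le> p * ln (p / q) + p * (a - b) * (1 - ln b - ln c)"
proof -
  have a_pos: "0 < a" and a_le: "a \<le> 1" unfolding a_eq using p_pos q_pos c_pos by auto
  define h where "h = a + 1 - b"
  have h_pos: "0 < h" using a_pos b_le by (simp add: h_def)
  define L where "L = ln (p / q)"
  have log_ratio: "(a - b) * L \<le> (a - b) * (- ln c - ln a)"
  proof (cases "a < 1")
    case True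
    then have "a = q / (c * p)" unfolding a_eq by simp
    then have "L = - ln c - ln a" unfolding L_def using p_pos q_pos c_pos by (simp add: ln_div ln_mult)
    then show ?thesis by simp
  next
    case False
    then have "a = 1" using a_le by simp
    then have "1 \<le> q / (c * p)" unfolding a_eq by (metis min.absorb_iff1)
    then have "c * p \<le> q" using p_pos c_pos by (simp add: field_simps)
    then have "ln (c * p) \<le> ln q" using p_pos c_pos by (simp add: q_pos)
    then have "L \<le> - ln c" unfolding L_def using p_pos q_pos c_pos by (simp add: ln_div ln_mult)
    moreover have "0 \<le> a - b" using \<open>a = 1\<close> b_le by simp
    ultimately have "(a - b) * L \<le> (a - b) * (- ln c)" by (rule mult_left_mono)
    then show ?thesis using \<open>a = 1\<close> by simp
  qed
  have "ln (p * h / q) = ln h + L" using p_pos q_pos h_pos by (simp add: L_def ln_div ln_mult)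
  then have "p * h * ln (p * h / q) = p * (L + (h * ln h + (a - b) * L))"
    by (simp add: h_def algebra_simps)
  also have "\<dots> \<le> p * (L + (a - b) * (1 - ln b - ln c))"
    using shifted_entropy_le[OF b_pos b_le a_pos a_le] log_ratio p_pos
    by (intro mult_left_mono) (auto simp: h_def algebra_simps)
  finally show ?thesis unfolding h_def L_def by (simp add: algebra_simps)
qed

lemma emeasure_uniform_01_atMost:
  "0 \<le> a \<Longrightarrow> a \<le> 1 \<Longrightarrow> emeasure (uniform_measure lborel {0..1}) {..a} = ennreal a"
  by (simp add: emeasure_uniform_measure Int_atLeastAtMost divide_ennreal_def min_absorb2)

lemma emeasure_uniform_01_greaterThan:
  assumes "0 \<le> a" "a \<le> 1"
  shows "emeasure (uniform_measure lborel {0..1}) {a<..} = ennreal (1 - a)"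
proof -
  have "{0..1} \<inter> {a<..} = {a<..1::real}" using assms by auto
  then show ?thesis using assms by (simp add: emeasure_uniform_measure divide_ennreal_def)
qed

lemma nn_integral_uniform_01_choice:
  assumes "0 \<le> a" "a \<le> 1"
  shows "(\<integral>\<^sup>+ u. indicator A (if u \<le> a then x else x') \<partial>uniform_measure lborel {0..1})
       = ennreal (indicator A x * a + indicator A x' * (1 - a))"
proof -
  let ?U = "uniform_measure lborel {0..1::real}"
  have "(\<integral>\<^sup>+ u. indicator A (if u \<le> a then x else x') \<partial>?U)
      = (\<integral>\<^sup>+ u. ennreal (indicator A x) * indicator {..a} u
                 + ennreal (indicator A x') * indicator {a<..} u \<partial>?U)"
    by (intro nn_integral_cong) (auto split: split_indicator)
  also have "\<dots> = ennreal (indicator A x) * emeasure ?U {..a} + ennreal (indicator A x') * emeasure ?U {a<..}"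
    by (subst nn_integral_add) (auto simp: nn_integral_cmult_indicator)
  also have "\<dots> = ennreal (indicator A x * a + indicator A x' * (1 - a))"
    using assms unfolding emeasure_uniform_01_atMost[OF assms] emeasure_uniform_01_greaterThan[OF assms]
    by (simp add: ennreal_mult[symmetric] ennreal_plus[symmetric] del: ennreal_plus)
  finally show ?thesis .
qed

lemma emeasure_distr_resample:
  fixes M :: "'a::topological_space measure" and \<alpha> :: "'a \<Rightarrow> real"
  assumes "prob_space M" and [measurable_cong]: "sets M = sets borel"
    and [measurable]: "\<alpha> \<in> borel_measurable M"
    and \<alpha>_nonneg: "\<And>x. 0 \<le> \<alpha> x" and \<alpha>_le: "\<And>x. \<alpha> x \<le> 1"
    and A[measurable]: "A \<in> sets borel"
  shows "emeasure (distr ((M \<Otimes>\<^sub>M M) \<Otimes>\<^sub>M uniform_measure lborel {0..1}) borel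
           (\<lambda>((x, x'), u). if u \<le> \<alpha> x then x else x')) A
       = (\<integral>\<^sup>+ x. ennreal (indicator A x * \<alpha> x + (1 - \<alpha> x) * measure M A) \<partial>M)"
    (is "emeasure (distr ?P borel ?T) A = _")
proof -
  interpret M: prob_space M by fact
  interpret U: prob_space "uniform_measure lborel {0..1::real}"
    by (rule prob_space_uniform_measure) auto
  have T_meas[measurable]: "?T \<in> measurable ?P borel"
  proof -
    have "?T = (\<lambda>\<omega>. if snd \<omega> \<le> \<alpha> (fst (fst \<omega>)) then fst (fst \<omega>) else snd (fst \<omega>))"
      by (auto simp: fun_eq_iff split: prod.splits)
    then show ?thesis by simp
  qed
  have inner: "(\<integral>\<^sup>+ x'. ennreal (indicator A x * \<alpha> x + indicator A x' * (1 - \<alpha> x)) \<partial>M)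
      = ennreal (indicator A x * \<alpha> x + (1 - \<alpha> x) * measure M A)" for x
  proof -
    have "(\<integral>\<^sup>+ x'. ennreal (indicator A x * \<alpha> x + indicator A x' * (1 - \<alpha> x)) \<partial>M)
       = (\<integral>\<^sup>+ x'. ennreal (indicator A x * \<alpha> x) + ennreal (1 - \<alpha> x) * indicator A x' \<partial>M)"
      using \<alpha>_nonneg[of x] \<alpha>_le[of x]
      by (intro nn_integral_cong) (auto simp: ennreal_plus[symmetric] simp del: ennreal_plus split: split_indicator)
    also have "\<dots> = ennreal (indicator A x * \<alpha> x + (1 - \<alpha> x) * measure M A)"
      using \<alpha>_nonneg[of x] \<alpha>_le[of x]
      by (subst nn_integral_add)
        (auto simp: nn_integral_cmult_indicator M.emeasure_eq_measure M.prob_space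
          ennreal_mult[symmetric] ennreal_plus[symmetric] simp del: ennreal_plus)
    finally show ?thesis .
  qed
  have "emeasure (distr ?P borel ?T) A = (\<integral>\<^sup>+ y. indicator A y \<partial>distr ?P borel ?T)"
    by simp
  also have "\<dots> = (\<integral>\<^sup>+ \<omega>. indicator A (?T \<omega>) \<partial>?P)"
    by (rule nn_integral_distr[OF T_meas]) simp
  also have "\<dots> = (\<integral>\<^sup>+ z. \<integral>\<^sup>+ u. indicator A (?T (z, u)) \<partial>uniform_measure lborel {0..1} \<partial>(M \<Otimes>\<^sub>M M))"
    by (rule U.nn_integral_fst[symmetric]) measurable
  also have "\<dots> = (\<integral>\<^sup>+ z. ennreal (indicator A (fst z) * \<alpha> (fst z) + indicator A (snd z) * (1 - \<alpha> (fst z))) \<partial>(M \<Otimes>\<^sub>M M))"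
    using \<alpha>_nonneg \<alpha>_le by (intro nn_integral_cong) (auto simp: nn_integral_uniform_01_choice)
  also have "\<dots> = (\<integral>\<^sup>+ x. \<integral>\<^sup>+ x'. ennreal (indicator A x * \<alpha> x + indicator A x' * (1 - \<alpha> x)) \<partial>M \<partial>M)"
    by (subst M.nn_integral_fst[symmetric]) simp_all
  finally show ?thesis by (simp add: inner)
qed

lemma distr_resample:
  fixes M :: "'a::topological_space measure" and \<alpha> :: "'a \<Rightarrow> real"
  assumes "prob_space M" and sets_M[measurable_cong]: "sets M = sets borel"
    and [measurable]: "\<alpha> \<in> borel_measurable M"
    and \<alpha>_nonneg: "\<And>x. 0 \<le> \<alpha> x" and \<alpha>_le: "\<And>x. \<alpha> x \<le> 1"
  shows "distr ((M \<Otimes>\<^sub>M M) \<Otimes>\<^sub>M uniform_measure lborel {0..1}) borel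
           (\<lambda>((x, x'), u). if u \<le> \<alpha> x then x else x')
       = density M (\<lambda>x. ennreal (\<alpha> x + 1 - (\<integral>y. \<alpha> y \<partial>M)))"
    (is "distr ?P borel ?T = density M (\<lambda>x. ennreal (\<alpha> x + 1 - ?\<beta>))")
proof (rule measure_eqI)
  interpret M: prob_space M by fact
  fix A assume "A \<in> sets (distr ?P borel ?T)"
  then have A[measurable]: "A \<in> sets borel" by simp
  define m where "m = measure M A"
  have m_bounds: "0 \<le> m" "m \<le> 1" by (simp_all add: m_def)
  have \<alpha>_le_2: "\<alpha> x \<le> 2" for x using \<alpha>_le[of x] by simp
  have bounded_integrable: "integrable M h" if [measurable]: "h \<in> borel_measurable M"
    and "\<And>x. \<bar>h x\<bar> \<le> 2" for h :: "'a \<Rightarrow> real"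
    using that by (intro M.integrable_const_bound[where B=2]) auto
  have [simp]: "integrable M \<alpha>" "integrable M (indicator A :: 'a \<Rightarrow> real)"
    "integrable M (\<lambda>x. indicator A x * \<alpha> x)"
    using \<alpha>_nonneg \<alpha>_le_2 by (auto intro!: bounded_integrable simp: abs_le_iff split: split_indicator)
  have \<beta>_le: "?\<beta> \<le> 1" using \<alpha>_le by (intro M.integral_le_const) auto
  have \<beta>_nonneg: "0 \<le> ?\<beta>" by (simp add: \<alpha>_nonneg)
  have "emeasure (distr ?P borel ?T) A = (\<integral>\<^sup>+ x. ennreal (indicator A x * \<alpha> x + (1 - \<alpha> x) * m) \<partial>M)"
    unfolding m_def using assms by (intro emeasure_distr_resample) auto
  also have "\<dots> = ennreal (\<integral> x. indicator A x * \<alpha> x + (1 - \<alpha> x) * m \<partial>M)"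
  proof (intro nn_integral_eq_integral bounded_integrable AE_I2)
    fix x
    have "0 \<le> (1 - \<alpha> x) * m" "(1 - \<alpha> x) * m \<le> 1"
      using \<alpha>_nonneg[of x] \<alpha>_le[of x] m_bounds by (auto intro: mult_le_one)
    then show "\<bar>indicator A x * \<alpha> x + (1 - \<alpha> x) * m\<bar> \<le> 2"
      "0 \<le> indicator A x * \<alpha> x + (1 - \<alpha> x) * m"
      using \<alpha>_nonneg[of x] \<alpha>_le[of x] by (auto split: split_indicator)
  qed simp
  also have "(\<integral> x. indicator A x * \<alpha> x + (1 - \<alpha> x) * m \<partial>M) = (\<integral> x. indicator A x * \<alpha> x \<partial>M) + m - ?\<beta> * m"
    by (simp add: left_diff_distrib M.prob_space)
  also have "\<dots> = (\<integral> x. (\<alpha> x + 1 - ?\<beta>) * indicator A x \<partial>M)"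
  proof -
    have "(\<lambda>x. (\<alpha> x + 1 - ?\<beta>) * indicator A x)
        = (\<lambda>x. indicator A x * \<alpha> x + indicator A x - ?\<beta> * indicator A x)"
      by (auto simp: fun_eq_iff algebra_simps)
    then show ?thesis by (simp add: m_def)
  qed
  also have "ennreal \<dots> = (\<integral>\<^sup>+ x. ennreal ((\<alpha> x + 1 - ?\<beta>) * indicator A x) \<partial>M)"
  proof (intro nn_integral_eq_integral[symmetric] bounded_integrable AE_I2)
    fix x
    show "\<bar>(\<alpha> x + 1 - ?\<beta>) * indicator A x\<bar> \<le> 2" "0 \<le> (\<alpha> x + 1 - ?\<beta>) * indicator A x"
      using \<alpha>_nonneg[of x] \<alpha>_le[of x] \<beta>_nonneg \<beta>_le by (auto split: split_indicator)
  qed simp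
  also have "\<dots> = emeasure (density M (\<lambda>x. ennreal (\<alpha> x + 1 - ?\<beta>))) A"
    by (simp add: emeasure_density) (intro nn_integral_cong; simp split: split_indicator)
  finally show "emeasure (distr ?P borel ?T) A = emeasure (density M (\<lambda>x. ennreal (\<alpha> x + 1 - ?\<beta>))) A" .
qed (simp add: sets_M)

definition ereal_integral :: "'a measure \<Rightarrow> ('a \<Rightarrow> real) \<Rightarrow> ereal" where
  "ereal_integral M F = enn2ereal (\<integral>\<^sup>+ x. ennreal (F x) \<partial>M) - enn2ereal (\<integral>\<^sup>+ x. ennreal (- F x) \<partial>M)"

lemma ereal_integral_mono_add_zero_mean:
  fixes F G H :: "'a \<Rightarrow> real"
  assumes [measurable]: "F \<in> borel_measurable M" "G \<in> borel_measurable M"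
    and H_int: "integrable M H" and H_zero: "integral\<^sup>L M H = 0"
    and le: "\<And>x. F x \<le> G x + H x"
    and G_neg_finite: "(\<integral>\<^sup>+ x. ennreal (- G x) \<partial>M) < \<infinity>"
  shows "ereal_integral M F \<le> ereal_integral M G"
proof (cases "(\<integral>\<^sup>+ x. ennreal (G x) \<partial>M) = \<infinity>")
  case True
  with G_neg_finite show ?thesis
    by (cases "(\<integral>\<^sup>+ x. ennreal (- G x) \<partial>M)" rule: ennreal_cases) (auto simp: ereal_integral_def)
next
  case False
  then have G_int: "integrable M G" using G_neg_finite by (auto simp: real_integrable_def)
  then have GH_int: "integrable M (\<lambda>x. G x + H x)" using H_int by simp
  have "ereal_integral M F \<le> ereal_integral M (\<lambda>x. G x + H x)"
    unfolding ereal_integral_def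
  proof (intro ereal_minus_mono)
    have "(\<integral>\<^sup>+ x. ennreal (F x) \<partial>M) \<le> (\<integral>\<^sup>+ x. ennreal (G x + H x) \<partial>M)"
      by (intro nn_integral_mono ennreal_leI le)
    then show "enn2ereal (\<integral>\<^sup>+ x. ennreal (F x) \<partial>M) \<le> enn2ereal (\<integral>\<^sup>+ x. ennreal (G x + H x) \<partial>M)"
      by (simp add: less_eq_ennreal.rep_eq[symmetric])
    have "(\<integral>\<^sup>+ x. ennreal (- (G x + H x)) \<partial>M) \<le> (\<integral>\<^sup>+ x. ennreal (- F x) \<partial>M)"
      by (intro nn_integral_mono ennreal_leI) (use le in \<open>auto simp: le_minus_iff add.commute\<close>)
    then show "enn2ereal (\<integral>\<^sup>+ x. ennreal (- (G x + H x)) \<partial>M) \<le> enn2ereal (\<integral>\<^sup>+ x. ennreal (- F x) \<partial>M)"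
      by (simp add: less_eq_ennreal.rep_eq[symmetric])
  qed
  also have "ereal_integral M (\<lambda>x. G x + H x) = ereal_integral M G"
  proof -
    have "ereal_integral M K = ereal (integral\<^sup>L M K)" if "integrable M K" for K
      using that by (rule integrableE) (auto simp: ereal_integral_def)
    then show ?thesis using G_int GH_int H_int H_zero by simp
  qed
  finally show ?thesis .
qed

lemma has_lebesgue_density_AE_eq:
  fixes p p' :: "'a::euclidean_space \<Rightarrow> real"
  assumes "has_lebesgue_density (density lborel (\<lambda>x. ennreal (p x))) p'"
    and "p \<in> borel_measurable lborel" and "\<And>x. 0 \<le> p x"
  shows "AE x in lborel. p' x = p x"
proof -
  have "p' \<in> borel_measurable lborel" "\<And>x. 0 \<le> p' x"
    and "density lborel (\<lambda>x. ennreal (p x)) = density lborel (\<lambda>x. ennreal (p' x))"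
    using assms(1) unfolding has_lebesgue_density_def by auto
  then have "AE x in lborel. ennreal (p x) = ennreal (p' x)"
    using assms(2) by (subst (asm) sigma_finite_measure.density_unique_iff[OF sigma_finite_lborel]) auto
  then show ?thesis by eventually_elim (use assms(3) \<open>\<And>x. 0 \<le> p' x\<close> in auto)
qed

lemma KL_density_lborel:
  fixes p q :: "'a::euclidean_space \<Rightarrow> real"
  assumes p_meas: "p \<in> borel_measurable lborel" and p_nonneg: "\<And>x. 0 \<le> p x"
    and q_meas: "q \<in> borel_measurable lborel" and q_pos: "\<And>x. 0 < q x"
  shows "KL (density lborel (\<lambda>x. ennreal (p x))) (density lborel (\<lambda>x. ennreal (q x)))
       = ereal_integral lborel (\<lambda>x. p x * ln (p x / q x))"
proof -
  let ?\<mu> = "density lborel (\<lambda>x. ennreal (p x))" and ?\<nu> = "density lborel (\<lambda>x. ennreal (q x))"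
  define p' where "p' = (SOME p. has_lebesgue_density ?\<mu> p)"
  define q' where "q' = (SOME q. has_lebesgue_density ?\<nu> q)"
  have p: "has_lebesgue_density ?\<mu> p" and q: "has_lebesgue_density ?\<nu> q"
    using assms less_imp_le unfolding has_lebesgue_density_def by auto
  have p': "has_lebesgue_density ?\<mu> p'" unfolding p'_def using p by (metis someI_ex)
  have q': "has_lebesgue_density ?\<nu> q'" unfolding q'_def using q by (metis someI_ex)
  have KL_eq: "KL ?\<mu> ?\<nu> = KL_dens p' q'"
    unfolding KL_def p'_def q'_def using p q by auto
  have AE_p: "AE x in lborel. p' x = p x"
    by (rule has_lebesgue_density_AE_eq[OF p' p_meas p_nonneg])
  have AE_q: "AE x in lborel. q' x = q x"
    by (rule has_lebesgue_density_AE_eq[OF q' q_meas]) (simp add: q_pos less_imp_le)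
  have "emeasure lborel {x \<in> space lborel. 0 < p' x \<and> q' x = 0} = 0"
    using AE_q by (intro emeasure_eq_0_AE) (auto elim!: eventually_mono simp: q_pos less_imp_neq[symmetric])
  then have null: "emeasure lborel {x. 0 < p' x \<and> q' x = 0} = 0" by simp
  have integrals: "(\<integral>\<^sup>+ x. ennreal (s * (p' x * ln (p' x / q' x))) \<partial>lborel)
      = (\<integral>\<^sup>+ x. ennreal (s * (p x * ln (p x / q x))) \<partial>lborel)" for s :: real
    using AE_p AE_q by (intro nn_integral_cong_AE) (auto elim!: eventually_mono eventually_rev_mp)
  show ?thesis
    using null integrals[of 1] integrals[of "-1"] by (simp add: KL_eq KL_dens_def ereal_integral_def)
qed

lemma integral_pos:
  fixes h :: "'a \<Rightarrow> real"
  assumes h_int: "integrable M h" and h_pos: "\<And>x. x \<in> space M \<Longrightarrow> 0 < h x"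
    and "emeasure M (space M) \<noteq> 0"
  shows "0 < integral\<^sup>L M h"
proof -
  have "integral\<^sup>L M h \<noteq> 0"
  proof
    assume "integral\<^sup>L M h = 0"
    then have "AE x in M. h x = 0"
      using h_pos by (subst (asm) integral_nonneg_eq_0_iff_AE[OF h_int]) (auto intro: less_imp_le)
    then have "emeasure M {x \<in> space M. h x \<noteq> 0} = 0" by (intro emeasure_eq_0_AE) simp
    moreover have "{x \<in> space M. h x \<noteq> 0} = space M" using h_pos by force
    ultimately show False using assms(3) by simp
  qed
  moreover have "0 \<le> integral\<^sup>L M h" using h_pos by (simp add: less_imp_le)
  ultimately show ?thesis by simp
qed

lemma normalized_density:
  fixes f :: "'a::euclidean_space \<Rightarrow> real"
  assumes f_pos: "\<And>x. 0 < f x" and f_int: "integrable lborel f"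
  defines "p \<equiv> \<lambda>x. f x / integral\<^sup>L lborel f"
  shows "0 < integral\<^sup>L lborel f" and "\<And>x. 0 < p x" and "integrable lborel p"
    and "integral\<^sup>L lborel p = 1"
proof -
  show Z_pos: "0 < integral\<^sup>L lborel f" by (rule integral_pos[OF f_int f_pos]) simp
  then show "0 < p x" for x by (simp add: p_def f_pos)
  show "integrable lborel p" unfolding p_def using f_int by simp
  show "integral\<^sup>L lborel p = 1" unfolding p_def using Z_pos by simp
qed

lemma prob_space_density_lborel:
  fixes p :: "'a::euclidean_space \<Rightarrow> real"
  assumes p_nonneg: "\<And>x. 0 \<le> p x" and p_int: "integrable lborel p" and p_one: "integral\<^sup>L lborel p = 1"
  shows "prob_space (density lborel (\<lambda>x. ennreal (p x)))"
proof (rule prob_spaceI)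
  have "(\<integral>\<^sup>+ x. ennreal (p x) \<partial>lborel) = 1"
    using nn_integral_eq_integral[OF p_int] p_nonneg p_one by simp
  moreover have "p \<in> borel_measurable lborel" using p_int by (rule borel_measurable_integrable)
  ultimately show "emeasure (density lborel (\<lambda>x. ennreal (p x))) (space (density lborel (\<lambda>x. ennreal (p x)))) = 1"
    by (simp add: emeasure_density)
qed

lemma resample_density_lborel:
  fixes p \<alpha> :: "'a::euclidean_space \<Rightarrow> real"
  assumes p_nonneg: "\<And>x. 0 \<le> p x" and p_int: "integrable lborel p" and p_one: "integral\<^sup>L lborel p = 1"
    and [measurable]: "\<alpha> \<in> borel_measurable borel"
    and \<alpha>_nonneg: "\<And>x. 0 \<le> \<alpha> x" and \<alpha>_le: "\<And>x. \<alpha> x \<le> 1"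
  defines "\<mu> \<equiv> density lborel (\<lambda>x. ennreal (p x))"
  defines "\<beta> \<equiv> \<integral>x. \<alpha> x \<partial>\<mu>"
  shows "distr ((\<mu> \<Otimes>\<^sub>M \<mu>) \<Otimes>\<^sub>M uniform_measure lborel {0..1}) borel
           (\<lambda>((x, x'), u). if u \<le> \<alpha> x then x else x')
       = density lborel (\<lambda>x. ennreal (p x * (\<alpha> x + 1 - \<beta>)))"
    and "integral\<^sup>L lborel (\<lambda>x. p x * (\<alpha> x + 1 - \<beta>)) = 1"
proof -
  interpret \<mu>: prob_space \<mu>
    unfolding \<mu>_def using p_nonneg p_int p_one by (rule prob_space_density_lborel)
  have [measurable]: "p \<in> borel_measurable lborel" using p_int by (rule borel_measurable_integrable)
  have "distr ((\<mu> \<Otimes>\<^sub>M \<mu>) \<Otimes>\<^sub>M uniform_measure lborel {0..1}) borel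
           (\<lambda>((x, x'), u). if u \<le> \<alpha> x then x else x') = density \<mu> (\<lambda>x. ennreal (\<alpha> x + 1 - \<beta>))"
    unfolding \<beta>_def using \<alpha>_nonneg \<alpha>_le
    by (intro distr_resample \<mu>.prob_space_axioms) (auto simp: \<mu>_def)
  then show "distr ((\<mu> \<Otimes>\<^sub>M \<mu>) \<Otimes>\<^sub>M uniform_measure lborel {0..1}) borel
           (\<lambda>((x, x'), u). if u \<le> \<alpha> x then x else x')
       = density lborel (\<lambda>x. ennreal (p x * (\<alpha> x + 1 - \<beta>)))"
    using p_nonneg by (simp add: \<mu>_def density_density_eq ennreal_mult')
  have "integrable \<mu> \<alpha>"
    using \<alpha>_nonneg \<alpha>_le by (intro \<mu>.integrable_const_bound[where B=1]) (auto simp: \<mu>_def)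
  then have "(\<integral>x. \<alpha> x + 1 - \<beta> \<partial>\<mu>) = 1" by (simp add: \<mu>.prob_space \<beta>_def)
  then show "integral\<^sup>L lborel (\<lambda>x. p x * (\<alpha> x + 1 - \<beta>)) = 1"
    unfolding \<mu>_def using p_nonneg by (subst (asm) integral_density) auto
qed

lemma nn_integral_neg_log_ratio_le:
  fixes p q :: "'a \<Rightarrow> real"
  assumes "\<And>x. 0 < p x" "\<And>x. 0 < q x"
  shows "(\<integral>\<^sup>+ x. ennreal (- (p x * ln (p x / q x))) \<partial>M) \<le> (\<integral>\<^sup>+ x. ennreal (q x) \<partial>M)"
proof (intro nn_integral_mono ennreal_leI)
  fix x
  have "p x * ln (q x / p x) \<le> p x * (q x / p x - 1)"
    using assms[of x] by (intro mult_left_mono ln_le_minus_one) auto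
  also have "\<dots> \<le> q x" using assms(1)[of x] by (simp add: field_simps)
  finally show "- (p x * ln (p x / q x)) \<le> q x"
    using assms[of x] by (simp add: ln_div algebra_simps)
qed

lemma KL_resample_le:
  fixes p q \<alpha> :: "'a::euclidean_space \<Rightarrow> real" and c :: real
  assumes p_pos: "\<And>x. 0 < p x" and p_int: "integrable lborel p" and p_one: "integral\<^sup>L lborel p = 1"
    and q_pos: "\<And>x. 0 < q x" and q_int: "integrable lborel q"
    and c_pos: "0 < c" and \<alpha>_eq: "\<And>x. \<alpha> x = min 1 (q x / (c * p x))"
  defines "\<beta> \<equiv> \<integral>x. \<alpha> x \<partial>density lborel (\<lambda>x. ennreal (p x))"
  shows "KL (density lborel (\<lambda>x. ennreal (p x * (\<alpha> x + 1 - \<beta>)))) (density lborel (\<lambda>x. ennreal (q x)))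
       \<le> KL (density lborel (\<lambda>x. ennreal (p x))) (density lborel (\<lambda>x. ennreal (q x)))"
proof -
  have [measurable]: "p \<in> borel_measurable lborel" "q \<in> borel_measurable lborel"
    using p_int q_int by (simp_all add: borel_measurable_integrable)
  have [measurable]: "\<alpha> \<in> borel_measurable lborel"
    using \<alpha>_eq[abs_def] by simp
  have \<alpha>_pos: "0 < \<alpha> x" and \<alpha>_le: "\<alpha> x \<le> 1" for x
    using p_pos[of x] q_pos[of x] c_pos by (auto simp: \<alpha>_eq)
  have p\<alpha>_int: "integrable lborel (\<lambda>x. p x * \<alpha> x)"
    by (rule Bochner_Integration.integrable_bound[OF p_int])
      (use \<alpha>_pos \<alpha>_le p_pos in \<open>auto simp: abs_mult less_imp_le intro!: AE_I2 mult_left_le\<close>)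
  have \<beta>_eq: "\<beta> = integral\<^sup>L lborel (\<lambda>x. p x * \<alpha> x)"
    unfolding \<beta>_def by (subst integral_density) (auto simp: p_pos less_imp_le)
  have \<beta>_pos: "0 < \<beta>"
    unfolding \<beta>_eq by (rule integral_pos[OF p\<alpha>_int]) (simp_all add: p_pos \<alpha>_pos)
  have "\<beta> \<le> integral\<^sup>L lborel p"
    unfolding \<beta>_eq using \<alpha>_le p_pos
    by (intro integral_mono p\<alpha>_int p_int) (auto intro: mult_left_le less_imp_le)
  then have \<beta>_le: "\<beta> \<le> 1" using p_one by simp
  define K where "K = 1 - ln \<beta> - ln c"
  have pointwise: "p x * (\<alpha> x + 1 - \<beta>) * ln (p x * (\<alpha> x + 1 - \<beta>) / q x)
      \<le> p x * ln (p x / q x) + (K * (p x * \<alpha> x) - K * \<beta> * p x)" for x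
    using resample_integrand_le[OF p_pos q_pos c_pos \<beta>_pos \<beta>_le \<alpha>_eq]
    by (simp add: K_def algebra_simps)
  have "(\<integral>\<^sup>+ x. ennreal (- (p x * ln (p x / q x))) \<partial>lborel) \<le> (\<integral>\<^sup>+ x. ennreal (q x) \<partial>lborel)"
    by (rule nn_integral_neg_log_ratio_le[OF p_pos q_pos])
  also have "\<dots> < \<infinity>" using q_pos by (simp add: nn_integral_eq_integral[OF q_int] less_imp_le)
  finally have neg_part_finite: "(\<integral>\<^sup>+ x. ennreal (- (p x * ln (p x / q x))) \<partial>lborel) < \<infinity>" .
  have "ereal_integral lborel (\<lambda>x. p x * (\<alpha> x + 1 - \<beta>) * ln (p x * (\<alpha> x + 1 - \<beta>) / q x))
      \<le> ereal_integral lborel (\<lambda>x. p x * ln (p x / q x))"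
    using pointwise p\<alpha>_int p_int p_one neg_part_finite
    by (intro ereal_integral_mono_add_zero_mean[where H = "\<lambda>x. K * (p x * \<alpha> x) - K * \<beta> * p x"])
      (auto simp: \<beta>_eq)
  moreover have "0 \<le> p x * (\<alpha> x + 1 - \<beta>)" for x
    using p_pos[of x] \<alpha>_pos[of x] \<beta>_le by simp
  ultimately show ?thesis
    by (simp add: KL_density_lborel q_pos less_imp_le p_pos)
qed

theorem proposition1:
  fixes f g :: "'a::euclidean_space \<Rightarrow> real" and c :: real
  assumes f_pos: "\<And>x. 0 < f x" and g_pos: "\<And>x. 0 < g x"
    and f_int: "integrable lborel f" and g_int: "integrable lborel g"
    and c_pos: "0 < c"
  defines "Zf \<equiv> integral\<^sup>L lborel f"
    and "Zg \<equiv> integral\<^sup>L lborel g"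
  defines "p \<equiv> (\<lambda>x. f x / Zf)"
    and "q \<equiv> (\<lambda>x. g x / Zg)"
  defines "\<mu> \<equiv> density lborel (\<lambda>x. ennreal (p x))"
    and "\<nu> \<equiv> density lborel (\<lambda>x. ennreal (q x))"
  defines "\<alpha> \<equiv> (\<lambda>x. min 1 (g x / (c * f x)))"
  defines "\<mu>t \<equiv> distr ((\<mu> \<Otimes>\<^sub>M \<mu>) \<Otimes>\<^sub>M uniform_measure lborel {0..(1::real)}) borel
                   (\<lambda>((x, x'), u). if u \<le> \<alpha> x then x else x')"
  defines "ft \<equiv> (\<lambda>x. f x * (\<alpha> x + 1 - (\<integral>y. \<alpha> y \<partial>\<mu>)))"
  defines "pt \<equiv> (\<lambda>x. p x * (\<alpha> x + 1 - (\<integral>y. \<alpha> y \<partial>\<mu>)))"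
  shows "\<mu>t = density lborel (\<lambda>x. ennreal (pt x))
         \<and> (\<forall>x. pt x = ft x / integral\<^sup>L lborel ft) \<and> integral\<^sup>L lborel ft = Zf
         \<and> KL \<mu>t \<nu> \<le> KL \<mu> \<nu>"
proof -
  have Zf_pos: "0 < Zf" and p_pos: "\<And>x. 0 < p x" and p_int: "integrable lborel p"
    and p_one: "integral\<^sup>L lborel p = 1"
    using normalized_density[OF f_pos f_int] unfolding Zf_def p_def by simp_all
  have Zg_pos: "0 < Zg" and q_pos: "\<And>x. 0 < q x" and q_int: "integrable lborel q"
    using normalized_density[OF g_pos g_int] unfolding Zg_def q_def by simp_all
  have \<alpha>_eq: "\<alpha> x = min 1 (q x / (c * Zf / Zg * p x))" for x
    using Zf_pos Zg_pos f_pos[of x] c_pos by (simp add: \<alpha>_def p_def q_def field_simps)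
  have \<alpha>_meas: "\<alpha> \<in> borel_measurable borel"
    using f_int g_int unfolding \<alpha>_def by (simp add: borel_measurable_integrable)
  have \<alpha>_nonneg: "0 \<le> \<alpha> x" and \<alpha>_le: "\<alpha> x \<le> 1" for x
    using f_pos[of x] g_pos[of x] c_pos by (simp_all add: \<alpha>_def)
  note resample = resample_density_lborel[OF less_imp_le[OF p_pos] p_int p_one \<alpha>_meas \<alpha>_nonneg \<alpha>_le]
  have \<mu>t_density: "\<mu>t = density lborel (\<lambda>x. ennreal (pt x))"
    unfolding \<mu>t_def pt_def \<mu>_def by (rule resample(1))
  have pt_integral: "integral\<^sup>L lborel pt = 1"
    unfolding pt_def \<mu>_def by (rule resample(2))
  have ft_eq: "ft = (\<lambda>x. Zf * pt x)"
    using Zf_pos by (simp add: ft_def pt_def p_def fun_eq_iff)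
  have "KL \<mu>t \<nu> \<le> KL \<mu> \<nu>"
    unfolding \<mu>t_density \<mu>_def \<nu>_def pt_def
    using Zf_pos Zg_pos c_pos
    by (intro KL_resample_le[OF p_pos p_int p_one q_pos q_int _ \<alpha>_eq]) simp_all
  with \<mu>t_density pt_integral show ?thesis using Zf_pos by (simp add: ft_eq)
qed

end
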